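(* Fix an outer iteration $k$ of SREDA and the inner procedure described in the context. Let $g(y)=-f(x_{k+1},y)$, $\tilde y_k^*=\arg\min_yg(y)$ and $\hat u_{k,t}=-\tilde u_{k,t}$. Then $$\sum_{t=0}^m\mathbb{E}\|\nabla g(\tilde y_{k,t})\|^2\le\frac2\lambda\mathbb{E}\big[g(\tilde y_{k,0})-g(\tilde y_k^* )\big]+\sum_{t=0}^m\mathbb{E}\|\nabla g(\tilde y_{k,t})-\hat u_{k,t}\|^2-(1-\ell\lambda)\sum_{t=0}^m\mathbb{E}\|\hat u_{k,t}\|^2.$$
   Context: Problem: $f(x,y)=\mathbb{E}[F(x,y;\xi)]$ on $\mathbb{R}^{d_1}\times\mathbb{R}^{d_2}$ with (A2) $\mathbb{E}\|\nabla F(x,y;\xi)-\nabla F(x',y';\xi)\|^2\le\ell^2(\|x-x'\|^2+\|y-y'\|^2)$, (A3) $F(x,\cdot;\xi)$ concave for each $\xi,x$, (A4) $f(x,\cdot)$ $\mu$-strongly concave, and also $\max_yf(\cdot,y)$ bounded below and $\mathbb{E}\|\nabla F-\nabla f\|^2\le\sigma^2$. $G_x=\nabla_xF$, $G_y=\nabla_yF$; samples are i.i.d. copies of $\xi$ independent of everything else. Inner procedure at outer iteration $k$ (step size $\lambda>0$, batch size $S_2$, integer $m$): given $x_k,y_k$, estimates $v_k,u_k$ and $x_{k+1}$, set $\tilde x_{k,-1}=x_k,\tilde y_{k,-1}=y_k,\tilde v_{k,-1}=v_k,\tilde u_{k,-1}=u_k,\tilde x_{k,0}=x_{k+1},\tilde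 y_{k,0}=y_k$; for $t=0,\dots,m+1$ draw $S_2$ fresh samples $\xi_{t,i}$ and set $\tilde v_{k,t}=\tilde v_{k,t-1}+\frac1{S_2}\sum_i[G_x(\tilde x_{k,t},\tilde y_{k,t};\xi_{t,i})-G_x(\tilde x_{k,t-1},\tilde y_{k,t-1};\xi_{t,i})]$, $\tilde u_{k,t}=\tilde u_{k,t-1}+\frac1{S_2}\sum_i[G_y(\tilde x_{k,t},\tilde y_{k,t};\xi_{t,i})-G_y(\tilde x_{k,t-1},\tilde y_{k,t-1};\xi_{t,i})]$, $\tilde x_{k,t+1}=\tilde x_{k,t}$, $\tilde y_{k,t+1}=\tilde y_{k,t}+\lambda\tilde u_{k,t}$. *)

theory Defs
  imports "HOL-Probability.Probability"
begin

definition strongly_concave_on :: "real \<Rightarrow> 'b::real_normed_vector set \<Rightarrow> ('b \<Rightarrow> real) \<Rightarrow> bool" where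
  "strongly_concave_on \<mu> S h \<longleftrightarrow> convex S \<and>
     (\<forall>y\<in>S. \<forall>y'\<in>S. \<forall>\<theta>::real. 0 \<le> \<theta> \<and> \<theta> \<le> 1 \<longrightarrow>
        h (\<theta> *\<^sub>R y + (1 - \<theta>) *\<^sub>R y') \<ge>
          \<theta> * h y + (1 - \<theta>) * h y' + \<mu> / 2 * \<theta> * (1 - \<theta>) * (norm (y - y'))\<^sup>2)"

definition batch_avg :: "nat \<Rightarrow> (nat \<Rightarrow> 'c) \<Rightarrow> ('c \<Rightarrow> 'v::real_vector) \<Rightarrow> 'v" where
  "batch_avg S2 s h = (1 / real S2) *\<^sub>R (\<Sum>i<S2. h (s i))"

text \<open>The sreda_inner procedure of SREDA at a fixed outer iteration, pathwise
  (for a fixed realisation \<open>xi t i\<close> of the samples \<open>\<xi>_{t,i}\<close>).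
  \<open>sreda_inner Gx Gy lam S2 xi xk yk vk uk xk1 t = (x~_{k,t}, y~_{k,t}, v~_{k,t}, u~_{k,t})\<close>
  for \<open>t \<ge> 0\<close>; the values at index -1 are \<open>(xk, yk, vk, uk)\<close>, and
  \<open>x~_{k,0} = xk1\<close>, \<open>y~_{k,0} = yk\<close>.\<close>
fun sreda_inner ::
  "('a::euclidean_space \<Rightarrow> 'b::euclidean_space \<Rightarrow> 'c \<Rightarrow> 'a) \<Rightarrow> ('a \<Rightarrow> 'b \<Rightarrow> 'c \<Rightarrow> 'b) \<Rightarrow>
   real \<Rightarrow> nat \<Rightarrow> (nat \<Rightarrow> nat \<Rightarrow> 'c) \<Rightarrow> 'a \<Rightarrow> 'b \<Rightarrow> 'a \<Rightarrow> 'b \<Rightarrow> 'a \<Rightarrow> nat \<Rightarrow> 'a \<times> 'b \<times> 'a \<times> 'b" where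
  "sreda_inner Gx Gy lam S2 xi xk yk vk uk xk1 0 =
     (xk1, yk,
      vk + batch_avg S2 (xi 0) (\<lambda>\<xi>. Gx xk1 yk \<xi> - Gx xk yk \<xi>),
      uk + batch_avg S2 (xi 0) (\<lambda>\<xi>. Gy xk1 yk \<xi> - Gy xk yk \<xi>))"
| "sreda_inner Gx Gy lam S2 xi xk yk vk uk xk1 (Suc t) =
     (case sreda_inner Gx Gy lam S2 xi xk yk vk uk xk1 t of (x, y, v, u) \<Rightarrow>
       let x' = x; y' = y + lam *\<^sub>R u in
       (x', y',
        v + batch_avg S2 (xi (Suc t)) (\<lambda>\<xi>. Gx x' y' \<xi> - Gx x y \<xi>),
        u + batch_avg S2 (xi (Suc t)) (\<lambda>\<xi>. Gy x' y' \<xi> - Gy x y \<xi>)))"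

end

theory Submission
  imports Defs
begin

text \<open>Everything is proved pathwise, for a fixed realisation of the samples, and integrated
  only at the end. The inner loop performs the steps \<open>y\<^sub>t\<^sub>+\<^sub>1 = y\<^sub>t - \<lambda> u\<^sub>t\<close> on
  \<open>g = -f(x\<^sub>k\<^sub>+\<^sub>1, -)\<close> with the inexact gradients \<open>u\<^sub>t\<close>. By (A2) and Jensen's inequality
  \<open>\<nabla>g\<close> is \<open>\<ell>\<close>-Lipschitz, so the descent lemma gives
  \<open>g(y\<^sub>t\<^sub>+\<^sub>1) \<le> g(y\<^sub>t) - \<lambda> \<nabla>g(y\<^sub>t)\<bullet>u\<^sub>t + \<ell>\<lambda>\<^sup>2/2 |u\<^sub>t|\<^sup>2\<close>. Expressing the inner product
  through \<open>|\<nabla>g(y\<^sub>t) - u\<^sub>t|\<^sup>2\<close> yields the \<open>t\<close>-th summand of the claim, and the differences of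
  \<open>g\<close> telescope to \<open>g(y\<^sub>0) - g(y\<^sub>m\<^sub>+\<^sub>1) \<le> g(y\<^sub>0) - g(y\<^sup>*)\<close>. The minimiser \<open>y\<^sup>*\<close>
  exists because strong concavity makes the superlevel sets of \<open>f(x\<^sub>k\<^sub>+\<^sub>1, -)\<close> bounded.\<close>

lemma (in prob_space) norm_integral_le_of_nn_integral_norm_square_le:
  fixes X :: "'a \<Rightarrow> 'b::{banach, second_countable_topology}"
  assumes X: "X \<in> borel_measurable M"
    and bound: "(\<integral>\<^sup>+ s. ennreal ((norm (X s))\<^sup>2) \<partial>M) \<le> ennreal (c\<^sup>2)"
    and c: "c \<ge> 0"
  shows "norm (\<integral>s. X s \<partial>M) \<le> c"
proof (cases "integrable M X")
  case True
  have "(\<integral>\<^sup>+ s. ennreal (norm (X s)) \<partial>M) = ennreal (\<integral>s. norm (X s) \<partial>M)"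
    using True by (simp add: nn_integral_eq_integral)
  then have "ennreal ((\<integral>s. norm (X s) \<partial>M)\<^sup>2) \<le> (\<integral>\<^sup>+ s. ennreal (norm (X s)) ^ 2 \<partial>M)"
    using Cauchy_Schwarz_nn_integral[of "\<lambda>s. ennreal (norm (X s))" M "\<lambda>_. 1"] X
    by (simp add: emeasure_space_1 ennreal_power)
  also have "\<dots> \<le> ennreal (c\<^sup>2)"
    using bound by (simp add: ennreal_power)
  finally have "(\<integral>s. norm (X s) \<partial>M)\<^sup>2 \<le> c\<^sup>2"
    by simp
  then have "(\<integral>s. norm (X s) \<partial>M) \<le> c"
    using c by (rule power2_le_imp_le)
  then show ?thesis
    by (rule order_trans[OF integral_norm_bound])
next
  case False
  with c show ?thesis
    by (simp add: not_integrable_integral_eq)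
qed

lemma (in prob_space) lipschitz_on_integral_of_mean_square_lipschitz:
  fixes G :: "'p::metric_space \<Rightarrow> 'a \<Rightarrow> 'b::{banach, second_countable_topology}"
  assumes G_int: "\<And>y. integrable M (G y)"
    and mean_square: "\<And>y y'. (\<integral>\<^sup>+ s. ennreal ((norm (G y s - G y' s))\<^sup>2) \<partial>M) \<le> ennreal ((L * dist y y')\<^sup>2)"
    and L: "L \<ge> 0"
  shows "L-lipschitz_on UNIV (\<lambda>y. \<integral>s. G y s \<partial>M)"
proof (rule lipschitz_onI[OF _ L])
  fix y y' :: 'p
  have "norm (\<integral>s. G y s - G y' s \<partial>M) \<le> L * dist y y'"
    using G_int mean_square L
    by (intro norm_integral_le_of_nn_integral_norm_square_le) auto
  then show "dist (\<integral>s. G y s \<partial>M) (\<integral>s. G y' s \<partial>M) \<le> L * dist y y'"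
    using G_int by (simp add: dist_norm)
qed

lemma has_derivative_partial_snd:
  fixes h :: "'a::real_inner \<Rightarrow> 'b::real_inner \<Rightarrow> real"
  assumes "((\<lambda>z. h (fst z) (snd z)) has_derivative (\<lambda>k. a \<bullet> fst k + b \<bullet> snd k)) (at (x, y))"
  shows "(h x has_derivative (\<lambda>k. b \<bullet> k)) (at y)"
proof -
  have "((\<lambda>y. (x, y)) has_derivative (\<lambda>k. (0, k))) (at y)"
    by (auto intro!: derivative_eq_intros)
  from has_derivative_compose[OF this assms] show ?thesis
    by (simp add: o_def)
qed

lemma strongly_concave_on_superlevel_bounded:
  fixes h :: "'b::euclidean_space \<Rightarrow> real"
  assumes sc: "strongly_concave_on \<mu> UNIV h" and \<mu>: "\<mu> > 0" and cont: "continuous_on UNIV h"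
  shows "bounded {y. h 0 \<le> h y}"
proof -
  obtain B where B: "\<And>z. z \<in> cball 0 1 \<Longrightarrow> h z \<le> B"
    using continuous_attains_sup[of "cball 0 1" h] continuous_on_subset[OF cont, of "cball 0 1"] by force
  have far: "norm y \<le> 1 + 2 * (B - h 0) / \<mu>" if y: "norm y \<ge> 1" "h 0 \<le> h y" for y
  proof -
    \<comment> \<open>compare \<open>h\<close> at \<open>0\<close>, at \<open>y\<close> and at the unit vector \<open>y / |y|\<close> on the segment between them\<close>
    define \<theta> where "\<theta> = 1 / norm y"
    have \<theta>: "0 \<le> \<theta>" "\<theta> \<le> 1" using y by (auto simp: \<theta>_def divide_le_eq)
    have "\<theta> * h y + (1 - \<theta>) * h 0 + \<mu> / 2 * \<theta> * (1 - \<theta>) * (norm (y - 0))\<^sup>2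
        \<le> h (\<theta> *\<^sub>R y + (1 - \<theta>) *\<^sub>R 0)"
      using sc \<theta> unfolding strongly_concave_on_def by blast
    also have "\<dots> \<le> B"
      using y by (intro B) (simp add: \<theta>_def)
    finally have "\<theta> * h y + (1 - \<theta>) * h 0 + \<mu> / 2 * \<theta> * (1 - \<theta>) * (norm y)\<^sup>2 \<le> B"
      by simp
    moreover have "\<theta> * h 0 \<le> \<theta> * h y"
      using y \<theta> by (simp add: mult_left_mono)
    moreover have "\<mu> / 2 * \<theta> * (1 - \<theta>) * (norm y)\<^sup>2 = \<mu> / 2 * (norm y - 1)"
      using y by (auto simp: \<theta>_def power2_eq_square field_simps)
    moreover have "(1 - \<theta>) * h 0 = h 0 - \<theta> * h 0"
      by (simp add: algebra_simps)
    ultimately have "h 0 + \<mu> / 2 * (norm y - 1) \<le> B"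
      by linarith
    then show ?thesis using \<mu> by (simp add: field_simps)
  qed
  have "norm y \<le> max 1 (1 + 2 * (B - h 0) / \<mu>)" if "h 0 \<le> h y" for y
    using far[OF _ that] by (cases "1 \<le> norm y") auto
  then show ?thesis by (auto intro: boundedI)
qed

lemma strongly_concave_on_attains_max:
  fixes h :: "'b::euclidean_space \<Rightarrow> real"
  assumes sc: "strongly_concave_on \<mu> UNIV h" and \<mu>: "\<mu> > 0" and cont: "continuous_on UNIV h"
  shows "\<exists>y0. \<forall>y. h y \<le> h y0"
proof -
  let ?S = "{y. h 0 \<le> h y}"
  have "closed ?S"
    using cont by (intro closed_Collect_le continuous_on_const) auto
  then have "compact ?S"
    using strongly_concave_on_superlevel_bounded[OF assms] by (simp add: compact_eq_bounded_closed)
  then obtain y0 where y0: "y0 \<in> ?S" "\<And>y. y \<in> ?S \<Longrightarrow> h y \<le> h y0"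
    using continuous_attains_sup[of ?S h] continuous_on_subset[OF cont] by blast
  have "h y \<le> h y0" for y
  proof (cases "h 0 \<le> h y")
    case True
    with y0(2) show ?thesis by simp
  next
    case False
    with y0(1) show ?thesis by simp
  qed
  then show ?thesis by blast
qed

lemma lipschitz_gradient_quadratic_upper_bound:
  fixes \<phi> :: "'b::real_inner \<Rightarrow> real"
  assumes der: "\<And>y. (\<phi> has_derivative (\<lambda>h. G y \<bullet> h)) (at y)"
    and lip: "L-lipschitz_on UNIV G"
  shows "\<phi> y' \<le> \<phi> y + G y \<bullet> (y' - y) + L / 2 * (norm (y' - y))\<^sup>2"
proof -
  define d where "d = y' - y"
  define \<psi> where "\<psi> = (\<lambda>t::real. \<phi> (y + t *\<^sub>R d) - t * (G y \<bullet> d) - L / 2 * t\<^sup>2 * (norm d)\<^sup>2)"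
  have line: "((\<lambda>t::real. y + t *\<^sub>R d) has_derivative (\<lambda>h. h *\<^sub>R d)) (at t)" for t
    by (auto intro!: derivative_eq_intros)
  have "((\<lambda>t. \<phi> (y + t *\<^sub>R d)) has_derivative (\<lambda>h. G (y + t *\<^sub>R d) \<bullet> (h *\<^sub>R d))) (at t)" for t
    using has_derivative_compose[OF line der] by (simp add: o_def)
  then have "((\<lambda>t. \<phi> (y + t *\<^sub>R d)) has_real_derivative (G (y + t *\<^sub>R d) \<bullet> d)) (at t)" for t
    unfolding has_field_derivative_def by (rule has_derivative_eq_rhs) (auto simp: mult.commute)
  then have \<psi>_der: "(\<psi> has_real_derivative (G (y + t *\<^sub>R d) \<bullet> d - G y \<bullet> d - L * t * (norm d)\<^sup>2)) (at t)" for t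
    unfolding \<psi>_def by (auto intro!: derivative_eq_intros)
  have "\<psi> 1 \<le> \<psi> 0"
  proof (rule DERIV_nonpos_imp_nonincreasing[of 0 1 \<psi>])
    fix t :: real assume t: "0 \<le> t" "t \<le> 1"
    have "G (y + t *\<^sub>R d) \<bullet> d - G y \<bullet> d \<le> norm (G (y + t *\<^sub>R d) - G y) * norm d"
      by (metis inner_diff_left norm_cauchy_schwarz)
    also have "\<dots> \<le> L * norm (t *\<^sub>R d) * norm d"
      using lipschitz_on_normD[OF lip, of "y + t *\<^sub>R d" y] by (intro mult_right_mono) auto
    also have "\<dots> = L * t * (norm d)\<^sup>2"
      using t by (simp add: power2_eq_square)
    finally show "\<exists>z. DERIV \<psi> t :> z \<and> z \<le> 0"
      using \<psi>_der[of t] by auto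
  qed simp
  then show ?thesis
    unfolding \<psi>_def d_def by (simp add: algebra_simps)
qed

lemma lipschitz_gradient_step_bound:
  fixes \<phi> :: "'b::real_inner \<Rightarrow> real"
  assumes der: "\<And>y. (\<phi> has_derivative (\<lambda>h. G y \<bullet> h)) (at y)"
    and lip: "L-lipschitz_on UNIV G" and lam: "lam > 0"
  shows "(norm (G y))\<^sup>2
    \<le> 2 / lam * (\<phi> y - \<phi> (y - lam *\<^sub>R u)) + (norm (G y - u))\<^sup>2 - (1 - L * lam) * (norm u)\<^sup>2"
proof -
  have descent: "\<phi> (y - lam *\<^sub>R u) \<le> \<phi> y - lam * (G y \<bullet> u) + L / 2 * lam\<^sup>2 * (norm u)\<^sup>2"
    using lipschitz_gradient_quadratic_upper_bound[OF der lip, of "y - lam *\<^sub>R u" y] lam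
    by (simp add: power_mult_distrib)
  have expand: "(norm (G y - u))\<^sup>2 = (norm (G y))\<^sup>2 - 2 * (G y \<bullet> u) + (norm u)\<^sup>2"
    by (simp add: power2_norm_eq_inner inner_diff_left inner_diff_right inner_commute)
  have "lam * (norm (G y))\<^sup>2
      \<le> 2 * (\<phi> y - \<phi> (y - lam *\<^sub>R u)) + lam * (norm (G y - u))\<^sup>2 - lam * (1 - L * lam) * (norm u)\<^sup>2"
    using descent unfolding expand by (simp add: algebra_simps power2_eq_square)
  then show ?thesis
    using lam by (simp add: field_simps)
qed

lemma lipschitz_gradient_steps_sum_bound:
  fixes \<phi> :: "'b::real_inner \<Rightarrow> real"
  assumes der: "\<And>y. (\<phi> has_derivative (\<lambda>h. G y \<bullet> h)) (at y)"
    and lip: "L-lipschitz_on UNIV G" and lam: "lam > 0"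
    and step: "\<And>t. y (Suc t) = y t - lam *\<^sub>R u t"
    and min: "\<And>z. \<phi> ymin \<le> \<phi> z"
  shows "(\<Sum>t\<le>m. (norm (G (y t)))\<^sup>2)
    \<le> 2 / lam * (\<phi> (y 0) - \<phi> ymin) + (\<Sum>t\<le>m. (norm (G (y t) - u t))\<^sup>2)
      - (1 - L * lam) * (\<Sum>t\<le>m. (norm (u t))\<^sup>2)"
proof -
  have telescope: "(\<Sum>t\<le>m. \<phi> (y t) - \<phi> (y (Suc t))) = \<phi> (y 0) - \<phi> (y (Suc m))"
    by (rule sum_telescope)
  have "(\<Sum>t\<le>m. (norm (G (y t)))\<^sup>2)
      \<le> (\<Sum>t\<le>m. 2 / lam * (\<phi> (y t) - \<phi> (y (Suc t))) + (norm (G (y t) - u t))\<^sup>2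
                  - (1 - L * lam) * (norm (u t))\<^sup>2)"
    unfolding step by (intro sum_mono lipschitz_gradient_step_bound[OF der lip lam])
  also have "\<dots> = 2 / lam * (\<phi> (y 0) - \<phi> (y (Suc m))) + (\<Sum>t\<le>m. (norm (G (y t) - u t))\<^sup>2)
      - (1 - L * lam) * (\<Sum>t\<le>m. (norm (u t))\<^sup>2)"
    unfolding telescope[symmetric] by (simp only: sum_subtractf sum.distrib flip: sum_distrib_left)
  also have "\<dots> \<le> 2 / lam * (\<phi> (y 0) - \<phi> ymin) + (\<Sum>t\<le>m. (norm (G (y t) - u t))\<^sup>2)
      - (1 - L * lam) * (\<Sum>t\<le>m. (norm (u t))\<^sup>2)"
    using min[of "y (Suc m)"] lam by (simp add: divide_right_mono)
  finally show ?thesis .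
qed

lemma integral_sum_le_of_pointwise_bound:
  fixes A E U :: "'i \<Rightarrow> 'w \<Rightarrow> real"
  assumes "finite I" and "integrable M Gap"
    and "\<And>t. t \<in> I \<Longrightarrow> integrable M (A t)" "\<And>t. t \<in> I \<Longrightarrow> integrable M (E t)"
    and "\<And>t. t \<in> I \<Longrightarrow> integrable M (U t)"
    and "\<And>w. w \<in> space M \<Longrightarrow> (\<Sum>t\<in>I. A t w) \<le> a * Gap w + (\<Sum>t\<in>I. E t w) - b * (\<Sum>t\<in>I. U t w)"
  shows "(\<Sum>t\<in>I. \<integral>w. A t w \<partial>M)
    \<le> a * (\<integral>w. Gap w \<partial>M) + (\<Sum>t\<in>I. \<integral>w. E t w \<partial>M) - b * (\<Sum>t\<in>I. \<integral>w. U t w \<partial>M)"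
proof -
  have "(\<Sum>t\<in>I. \<integral>w. A t w \<partial>M) = (\<integral>w. (\<Sum>t\<in>I. A t w) \<partial>M)"
    using assms by (simp add: Bochner_Integration.integral_sum)
  also have "\<dots> \<le> (\<integral>w. a * Gap w + (\<Sum>t\<in>I. E t w) - b * (\<Sum>t\<in>I. U t w) \<partial>M)"
    using assms by (intro integral_mono_AE) auto
  also have "\<dots> = a * (\<integral>w. Gap w \<partial>M) + (\<Sum>t\<in>I. \<integral>w. E t w \<partial>M) - b * (\<Sum>t\<in>I. \<integral>w. U t w \<partial>M)"
    using assms by (simp add: Bochner_Integration.integral_sum)
  finally show ?thesis .
qed

lemma sreda_inner_y_Suc:
  "fst (snd (sreda_inner Gx Gy lam S2 xi xk yk vk uk xk1 (Suc t)))
    = fst (snd (sreda_inner Gx Gy lam S2 xi xk yk vk uk xk1 t))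
      + lam *\<^sub>R snd (snd (snd (sreda_inner Gx Gy lam S2 xi xk yk vk uk xk1 t)))"
  by (cases "sreda_inner Gx Gy lam S2 xi xk yk vk uk xk1 t") (simp add: Let_def)

theorem lemma9:
  fixes D :: "'c measure"
    and F :: "'a::euclidean_space \<Rightarrow> 'b::euclidean_space \<Rightarrow> 'c \<Rightarrow> real"
    and Gx :: "'a \<Rightarrow> 'b \<Rightarrow> 'c \<Rightarrow> 'a"
    and Gy :: "'a \<Rightarrow> 'b \<Rightarrow> 'c \<Rightarrow> 'b"
    and f :: "'a \<Rightarrow> 'b \<Rightarrow> real"
    and ell \<mu> \<sigma> lam :: real and S2 m :: nat
    and M :: "'w measure"
    and xk xk1 vk :: "'w \<Rightarrow> 'a" and yk uk :: "'w \<Rightarrow> 'b"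
    and \<xi> :: "nat \<Rightarrow> nat \<Rightarrow> 'w \<Rightarrow> 'c"
  assumes D: "prob_space D"
    and F_meas: "\<And>x y. integrable D (F x y)"
    and Gx_int: "\<And>x y. integrable D (Gx x y)"
    and Gy_int: "\<And>x y. integrable D (Gy x y)"
    and f_def: "\<And>x y. f x y = (\<integral>s. F x y s \<partial>D)"
    and F_grad: "\<And>x y s. s \<in> space D \<Longrightarrow>
        ((\<lambda>z. F (fst z) (snd z) s) has_derivative
          (\<lambda>h. Gx x y s \<bullet> fst h + Gy x y s \<bullet> snd h)) (at (x, y))"
    and f_grad: "\<And>x y. ((\<lambda>z. f (fst z) (snd z)) has_derivative
          (\<lambda>h. (\<integral>s. Gx x y s \<partial>D) \<bullet> fst h + (\<integral>s. Gy x y s \<partial>D) \<bullet> snd h)) (at (x, y))"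
    and A2: "\<And>x y x' y'. (\<integral>\<^sup>+ s. ennreal ((norm (Gx x y s - Gx x' y' s))\<^sup>2 + (norm (Gy x y s - Gy x' y' s))\<^sup>2) \<partial>D)
                 \<le> ennreal (ell\<^sup>2 * ((norm (x - x'))\<^sup>2 + (norm (y - y'))\<^sup>2))"
    and A3: "\<And>x s. s \<in> space D \<Longrightarrow> concave_on UNIV (\<lambda>y. F x y s)"
    and A4: "\<And>x. strongly_concave_on \<mu> UNIV (f x)"
    and ell_pos: "ell > 0" and \<mu>_pos: "\<mu> > 0"
    and bdd: "bdd_below (range (\<lambda>x. SUP y. f x y))"
    and var: "\<And>x y. (\<integral>\<^sup>+ s. ennreal ((norm (Gx x y s - (\<integral>s'. Gx x y s' \<partial>D)))\<^sup>2
                          + (norm (Gy x y s - (\<integral>s'. Gy x y s' \<partial>D)))\<^sup>2) \<partial>D) \<le> ennreal (\<sigma>\<^sup>2)"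
    and lam_pos: "lam > 0" and S2_pos: "S2 \<ge> 1"
    and M: "prob_space M"
    and rv: "xk \<in> borel_measurable M" "yk \<in> borel_measurable M" "vk \<in> borel_measurable M"
            "uk \<in> borel_measurable M" "xk1 \<in> borel_measurable M"
    and samp_meas: "\<And>t i. \<xi> t i \<in> measurable M D"
    and samp_distr: "\<And>t i. distr M D (\<xi> t i) = D"
    and samp_indep: "prob_space.indep_vars M (\<lambda>_. D) (\<lambda>ti. \<xi> (fst ti) (snd ti)) ({..Suc m} \<times> {..<S2})"
    and samp_indep_rest: "prob_space.indep_set M
          (sets (vimage_algebra (space M) (\<lambda>w. (xk w, yk w, vk w, uk w, xk1 w)) borel))
          (sets (vimage_algebra (space M)
             (\<lambda>w. \<lambda>ti\<in>{..Suc m} \<times> {..<S2}. \<xi> (fst ti) (snd ti) w)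
             (Pi\<^sub>M ({..Suc m} \<times> {..<S2}) (\<lambda>_. D))))"
  defines "g \<equiv> \<lambda>w y. - f (xk1 w) y"
    and "grad_g \<equiv> \<lambda>w y. - (\<integral>s. Gy (xk1 w) y s \<partial>D)"
    and "ystar \<equiv> \<lambda>w. (SOME y0. \<forall>y. - f (xk1 w) y0 \<le> - f (xk1 w) y)"
    and "ytil \<equiv> \<lambda>w t. fst (snd (sreda_inner Gx Gy lam S2 (\<lambda>t i. \<xi> t i w) (xk w) (yk w) (vk w) (uk w) (xk1 w) t))"
    and "uhat \<equiv> \<lambda>w t. - snd (snd (snd (sreda_inner Gx Gy lam S2 (\<lambda>t i. \<xi> t i w) (xk w) (yk w) (vk w) (uk w) (xk1 w) t)))"
  assumes int_gap: "integrable M (\<lambda>w. g w (ytil w 0) - g w (ystar w))"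
    and int_grad: "\<And>t. t \<le> m \<Longrightarrow> integrable M (\<lambda>w. (norm (grad_g w (ytil w t)))\<^sup>2)"
    and int_err: "\<And>t. t \<le> m \<Longrightarrow> integrable M (\<lambda>w. (norm (grad_g w (ytil w t) - uhat w t))\<^sup>2)"
    and int_uhat: "\<And>t. t \<le> m \<Longrightarrow> integrable M (\<lambda>w. (norm (uhat w t))\<^sup>2)"
  shows "(\<Sum>t\<le>m. \<integral>w. (norm (grad_g w (ytil w t)))\<^sup>2 \<partial>M)
          \<le> 2 / lam * (\<integral>w. g w (ytil w 0) - g w (ystar w) \<partial>M)
            + (\<Sum>t\<le>m. \<integral>w. (norm (grad_g w (ytil w t) - uhat w t))\<^sup>2 \<partial>M)
            - (1 - ell * lam) * (\<Sum>t\<le>m. \<integral>w. (norm (uhat w t))\<^sup>2 \<partial>M)"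
proof -
  interpret D: prob_space D by (rule D)
  have f_der: "(f x has_derivative (\<lambda>h. (\<integral>s. Gy x y s \<partial>D) \<bullet> h)) (at y)" for x y
    using f_grad by (rule has_derivative_partial_snd)
  have g_der: "(g w has_derivative (\<lambda>h. grad_g w y \<bullet> h)) (at y)" for w y
    unfolding g_def grad_g_def using has_derivative_minus[OF f_der] by (simp add: inner_minus_left)
  have Gy_mean_square: "(\<integral>\<^sup>+ s. ennreal ((norm (Gy x y s - Gy x y' s))\<^sup>2) \<partial>D) \<le> ennreal ((ell * dist y y')\<^sup>2)"
    for x y y'
    using order_trans[OF nn_integral_mono A2[of x y x y']]
    by (simp add: dist_norm power_mult_distrib)
  have g_lip: "ell-lipschitz_on UNIV (grad_g w)" for w
    using D.lipschitz_on_integral_of_mean_square_lipschitz[OF Gy_int Gy_mean_square] ell_pos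
    unfolding grad_g_def lipschitz_on_def by (simp add: dist_minus)
  have ystar_min: "g w (ystar w) \<le> g w y" for w y
  proof -
    have "continuous_on UNIV (f (xk1 w))"
      by (meson f_der has_derivative_continuous continuous_at_imp_continuous_on)
    then have "\<exists>y0. \<forall>y. - f (xk1 w) y0 \<le> - f (xk1 w) y"
      using strongly_concave_on_attains_max[OF A4 \<mu>_pos] by auto
    from someI_ex[OF this] show ?thesis unfolding g_def ystar_def by auto
  qed
  have ytil_Suc: "ytil w (Suc t) = ytil w t - lam *\<^sub>R uhat w t" for w t
    unfolding ytil_def uhat_def sreda_inner_y_Suc by simp
  have pathwise: "(\<Sum>t\<le>m. (norm (grad_g w (ytil w t)))\<^sup>2)
      \<le> 2 / lam * (g w (ytil w 0) - g w (ystar w)) + (\<Sum>t\<le>m. (norm (grad_g w (ytil w t) - uhat w t))\<^sup>2)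
        - (1 - ell * lam) * (\<Sum>t\<le>m. (norm (uhat w t))\<^sup>2)" for w
    by (rule lipschitz_gradient_steps_sum_bound) (use g_der g_lip lam_pos ytil_Suc ystar_min in auto)
  show ?thesis
    using int_gap int_grad int_err int_uhat pathwise
    by (intro integral_sum_le_of_pointwise_bound) auto
qed

end
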